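(* Let Assumptions (H1) and (H2) hold (with constant $\varepsilon>0$), and suppose each initial function $\mathcal{Q}_t^0$, $t=2,\ldots,T$, is either identically $-\infty$ or convex, Lipschitz continuous on $\mathcal{X}_{t-1}^\varepsilon$ and satisfies $\mathcal{Q}_t^0\le\mathcal{Q}_t$ there. Consider the sequences $\mathcal{Q}_t^k,\theta_t^k,\beta_t^k$ generated by SREDA. Then almost surely, for $t=2,\ldots,T+1$: (a) $\mathcal{Q}_t^k$ is convex and $\mathcal{Q}_t^k\le\mathcal{Q}_t$ on $\mathcal{X}_{t-1}^\varepsilon$ for all $k\ge1$; (b) the sequences $(\theta_t^k)_{k\ge1}$ and $(\beta_t^k)_{k\ge1}$ are bounded; (c) for every $k\ge1$, $\mathcal{Q}_t^k$ is Lipschitz continuous on $\mathcal{X}_{t-1}^\varepsilon$.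
   Context: Stages $t=1,\ldots,T$; $x_0\in\mathbb{R}^n$ given, $\mathcal{X}_0:=\{x_0\}$. Random data process $(\xi_t)$: $\xi_1$ deterministic; (H1): $(\xi_t)$ is interstage independent and for $t=2,\ldots,T$, $\xi_t$ is a random vector in $\mathbb{R}^K$ with discrete distribution and finite support $\Theta_t=\{\xi_{t,1},\ldots,\xi_{t,M}\}$. The components of $\xi_t$ include the entries of $(b_t,A_t,B_t)$. For each $t$: $\mathcal{X}_t\subset\mathbb{R}^n$, $f_t(x_{t-1},x_t,\xi_t)\in\mathbb{R}\cup\{+\infty\}$, vector function $g_t(x_{t-1},x_t,\xi_t)$, and $X_t(x_{t-1},\xi_t)=\{x_t\in\mathcal{X}_t: g_t(x_{t-1},x_t,\xi_t)\le0,\ A_tx_t+B_tx_{t-1}=b_t\}$. Dynamic programming: $\mathcal{Q}_{T+1}\equiv0$; $\mathfrak{Q}_t(x_{t-1},\xi_t)=\inf\{F_t(x_{t-1},x_t,\xi_t):=f_t(x_{t-1},x_t,\xi_t)+\mathcal{Q}_{t+1}(x_t): x_t\in X_t(x_{t-1},\xi_t)\}$; $\mathcal{Q}_t(x_{t-1})=\mathbb{E}[\mathfrak{Q}_t(x_{t-1},\xi_t)]$ for $t=2,\ldots,T$; $\mathcal{Q}_1(x_0)=\mathfrak{Q}_1(x_0,\xi_1)$ is the optimal value. $\mathcal{X}^\varepsilon:=\mathcal{X}+\varepsilon\mathbb{B}_n$ ($\mathbb{B}_n$ closed unit ball). (H2), for $t=1,\ldots,T$: 1) $\mathcal{X}_t$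 nonempty convex compact; 2) for all $x_{t-1},x_t$, $f_t(x_{t-1},x_t,\cdot)$ is measurable and for each $j$, $f_t(\cdot,\cdot,\xi_{t,j})$ is proper convex lsc; 3) for each $j$, each component of $g_t(\cdot,\cdot,\xi_{t,j})$ is convex lsc; 4) there is $\varepsilon>0$ such that for each $j$, $\mathcal{X}_{t-1}^\varepsilon\times\mathcal{X}_t\subset\mathrm{dom}\,f_t(\cdot,\cdot,\xi_{t,j})$ and $X_t(x_{t-1},\xi_{t,j})\neq\emptyset$ for all $x_{t-1}\in\mathcal{X}_{t-1}^\varepsilon$; 5) if $t\ge2$, for each $j$ there is $(\bar y,\bar x)\in(\mathcal{X}_{t-1}\times\mathrm{ri}(\mathcal{X}_t))\cap\mathrm{ri}(\{g_t(\cdot,\cdot,\xi_{t,j})\le0\})$ with $\bar x\in X_t(\bar y,\xi_{t,j})$. Scenario tree: root $n_0$ (stage 0, decision $x_0$) with one child $n_1$ (stage 1, $\xi_{n_1}=\xi_1$); each node of stage $t-1$ ($2\le t\le T$) has $M$ children $m$, one per $\xi_{t,j}$, with realization $\xi_m=\xi_{t,j}$ (containing $A_m,B_m,b_m$) and probability $p_m=\mathbb{P}(\xi_t=\xi_{t,j})$. $\mathrm{Nodes}(t)$ = nodes of stage $t$, $C(n)$ = children of $n$. SREDA: initial $\mathcal{Q}_t^0\le\mathcal{Q}_t$ ($t=2,\ldots,T$), $\mathcal{Q}_{T+1}^k\equiv0$ for all $k$; nonnegative $\lambda_{t,k}$ with $\lambda_{t,1}=\lambda_{T,k}=0$; arbitrary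 prox-centers $x_t^{P,k}\in\mathcal{X}_t$. Iteration $k\ge1$: Forward pass: $x_{n_0}^k=x_0$; for $t=1,\ldots,T$, every node $n$ of stage $t-1$ and every $m\in C(n)$, $x_m^k$ is an optimal solution of $\min\{\bar F_t^{k-1}(x_n^k,x_m,x_t^{P,k},\xi_m):x_m\in X_t(x_n^k,\xi_m)\}$, where $\bar F_t^{k-1}(x_n,x_m,x^P,\xi_m)=f_t(x_n,x_m,\xi_m)+\mathcal{Q}_{t+1}^{k-1}(x_m)+\lambda_{t,k}\|x_m-x^P\|^2$. Backward pass: select nodes $(n_1^k,\ldots,n_T^k)$ with $n_1^k=n_1$ and $n_t^k\in C(n_{t-1}^k)$, corresponding to a sample $(\xi_1^k,\ldots,\xi_T^k)$. For $t=T,\ldots,2$, with $n=n_{t-1}^k$: for each $m\in C(n)$ compute $\underline{\mathfrak{Q}}_t^k(x_n^k,\xi_m)=\inf\{f_t(x_n^k,x_m,\xi_m)+\mathcal{Q}_{t+1}^k(x_m):x_m\in X_t(x_n^k,\xi_m)\}$ and a subgradient $\pi_m^k\in\partial\underline{\mathfrak{Q}}_t^k(\cdot,\xi_m)(x_n^k)$; set $\theta_t^k=\sum_{m\in C(n)}p_m\underline{\mathfrak{Q}}_t^k(x_n^k,\xi_m)$, $\beta_t^k=\sum_{m\in C(n)}p_m\pi_m^k$, cut $\mathcal{C}_t^k(y)=\theta_t^k+\langle\beta_t^k,y-x_n^k\rangle$, and $\mathcal{Q}_t^k=\max\{\mathcal{Q}_t^{k-1},\mathcal{C}_t^k\}$.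 *)

theory Defs
  imports "HOL-Probability.Probability"
begin

text \<open>Data of the multistage stochastic program (H1): horizon T, number M of
realizations per stage t = 2..T, their probabilities, x0, the sets X_t, and for
stage t and realization index j the functions f_t(.,.,xi_{t,j}), g_t(.,.,xi_{t,j})
(vector valued, indexed by the finite type 'c) and the data A_t, B_t, b_t of xi_{t,j}.
Stage 1 is deterministic: only the index j = 0 is used there.\<close>

record ('n::finite, 'm::finite, 'c::finite) msp =
  horizon :: nat
  nreal :: nat
  prb :: "nat \<Rightarrow> nat \<Rightarrow> real"
  x0 :: "real^'n"
  Xc :: "nat \<Rightarrow> (real^'n) set"
  fc :: "nat \<Rightarrow> nat \<Rightarrow> (real^'n) \<times> (real^'n) \<Rightarrow> ereal"
  gc :: "nat \<Rightarrow> nat \<Rightarrow> (real^'n) \<times> (real^'n) \<Rightarrow> real^'c"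
  Ac :: "nat \<Rightarrow> nat \<Rightarrow> real^'n^'m"
  Bc :: "nat \<Rightarrow> nat \<Rightarrow> real^'n^'m"
  bc :: "nat \<Rightarrow> nat \<Rightarrow> real^'m"

definition supp :: "('n::finite,'m::finite,'c::finite) msp \<Rightarrow> nat \<Rightarrow> nat set" where
  "supp P t = (if t = 1 then {0} else {..<nreal P})"

definition pr :: "('n::finite,'m::finite,'c::finite) msp \<Rightarrow> nat \<Rightarrow> nat \<Rightarrow> real" where
  "pr P t j = (if t = 1 then 1 else prb P t j)"

definition Xst :: "('n::finite,'m::finite,'c::finite) msp \<Rightarrow> nat \<Rightarrow> (real^'n) set" where
  "Xst P t = (if t = 0 then {x0 P} else Xc P t)"

definition Xfeas :: "('n::finite,'m::finite,'c::finite) msp \<Rightarrow> nat \<Rightarrow> nat \<Rightarrow> real^'n \<Rightarrow> (real^'n) set" where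
  "Xfeas P t j y = {x \<in> Xc P t. (\<forall>i. gc P t j (y, x) $ i \<le> 0) \<and>
                     Ac P t j *v x + Bc P t j *v y = bc P t j}"

definition enl :: "('a::metric_space) set \<Rightarrow> real \<Rightarrow> 'a set" where
  "enl S e = (\<Union>y\<in>S. cball y e)"

text \<open>Dynamic programming: Qs P s is Q_{T+1-s}.\<close>
fun Qs :: "('n::finite,'m::finite,'c::finite) msp \<Rightarrow> nat \<Rightarrow> real^'n \<Rightarrow> ereal" where
  "Qs P 0 y = 0"
| "Qs P (Suc s) y =
     (let t = horizon P - s in
      (\<Sum>j\<in>supp P t. ereal (pr P t j) *
          Inf ((\<lambda>x. fc P t j (y, x) + Qs P s x) ` Xfeas P t j y)))"

definition Qcal :: "('n::finite,'m::finite,'c::finite) msp \<Rightarrow> nat \<Rightarrow> real^'n \<Rightarrow> ereal" where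
  "Qcal P t = Qs P (horizon P + 1 - t)"

definition econvex :: "('a::real_vector \<Rightarrow> ereal) \<Rightarrow> bool" where
  "econvex f \<longleftrightarrow> convex {(x, r::real). f x \<le> ereal r}"

definition eproper :: "('a \<Rightarrow> ereal) \<Rightarrow> bool" where
  "eproper f \<longleftrightarrow> (\<forall>x. f x \<noteq> -\<infinity>) \<and> (\<exists>x. f x \<noteq> \<infinity>)"

definition elsc :: "('a::topological_space \<Rightarrow> ereal) \<Rightarrow> bool" where
  "elsc f \<longleftrightarrow> (\<forall>c::real. closed {x. f x \<le> ereal c})"

definition edom :: "('a \<Rightarrow> ereal) \<Rightarrow> 'a set" where
  "edom f = {x. f x < \<infinity>}"

definition esubgrad :: "('a::real_inner \<Rightarrow> ereal) \<Rightarrow> 'a \<Rightarrow> 'a set" where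
  "esubgrad f x = {g. \<bar>f x\<bar> \<noteq> \<infinity> \<and> (\<forall>y. f x + ereal (g \<bullet> (y - x)) \<le> f y)}"

text \<open>Assumption (H1) (interstage independence is built into the indexing).\<close>
definition H1 :: "('n::finite,'m::finite,'c::finite) msp \<Rightarrow> bool" where
  "H1 P \<longleftrightarrow> 1 \<le> horizon P \<and>
     (\<forall>t\<in>{2..horizon P}. (\<forall>j<nreal P. 0 < prb P t j) \<and> (\<Sum>j<nreal P. prb P t j) = 1)"

definition H2 :: "('n::finite,'m::finite,'c::finite) msp \<Rightarrow> real \<Rightarrow> bool" where
  "H2 P eps \<longleftrightarrow> 0 < eps \<and> (\<forall>t\<in>{1..horizon P}.
     Xc P t \<noteq> {} \<and> convex (Xc P t) \<and> compact (Xc P t) \<and>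
     (\<forall>j\<in>supp P t. eproper (fc P t j) \<and> econvex (fc P t j) \<and> elsc (fc P t j)) \<and>
     (\<forall>j\<in>supp P t. \<forall>i. convex_on UNIV (\<lambda>z. gc P t j z $ i) \<and>
                         (\<forall>c. closed {z. gc P t j z $ i \<le> c})) \<and>
     (\<forall>j\<in>supp P t. enl (Xst P (t - 1)) eps \<times> Xc P t \<subseteq> edom (fc P t j) \<and>
                     (\<forall>y\<in>enl (Xst P (t - 1)) eps. Xfeas P t j y \<noteq> {})) \<and>
     (2 \<le> t \<longrightarrow> (\<forall>j\<in>supp P t. \<exists>yb xb. yb \<in> Xst P (t - 1) \<and> xb \<in> rel_interior (Xc P t) \<and>
            (yb, xb) \<in> rel_interior {z. \<forall>i. gc P t j z $ i \<le> 0} \<and> xb \<in> Xfeas P t j yb)))"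

text \<open>Nodes of stage t >= 1 are lists of realization indices
(for stages 2..t) of length t-1; n_1 = []. xf k m = x_m^k; sj k t = index of the
node sampled at stage t in iteration k; Qk k t = Q_t^k; pig k t j = pi_m^k for the
child m with index j; theta k t, beta k t as in the backward pass.\<close>
definition sreda_run ::
  "('n::finite,'m::finite,'c::finite) msp \<Rightarrow> (nat \<Rightarrow> nat \<Rightarrow> real) \<Rightarrow> (nat \<Rightarrow> nat \<Rightarrow> real^'n)
   \<Rightarrow> (nat \<Rightarrow> real^'n \<Rightarrow> ereal)
   \<Rightarrow> (nat \<Rightarrow> nat list \<Rightarrow> real^'n) \<Rightarrow> (nat \<Rightarrow> nat \<Rightarrow> nat)
   \<Rightarrow> (nat \<Rightarrow> nat \<Rightarrow> real^'n \<Rightarrow> ereal) \<Rightarrow> (nat \<Rightarrow> nat \<Rightarrow> nat \<Rightarrow> real^'n)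
   \<Rightarrow> (nat \<Rightarrow> nat \<Rightarrow> ereal) \<Rightarrow> (nat \<Rightarrow> nat \<Rightarrow> real^'n) \<Rightarrow> bool" where
  "sreda_run P lam xP Q0 xf sj Qk pig theta beta \<longleftrightarrow>
     (\<forall>t\<in>{2..horizon P}. Qk 0 t = Q0 t) \<and>
     (\<forall>k. Qk k (horizon P + 1) = (\<lambda>_. 0)) \<and>
     (\<forall>k\<ge>1. \<forall>t\<in>{2..horizon P}. sj k t < nreal P) \<and>
     (\<forall>k\<ge>1. \<forall>m. length m + 1 \<le> horizon P \<and> set m \<subseteq> {..<nreal P} \<longrightarrow>
        (let t = length m + 1;
             y = (if m = [] then x0 P else xf k (butlast m));
             j = (if m = [] then 0 else last m);
             F = (\<lambda>x. fc P t j (y, x) + Qk (k - 1) (t + 1) x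
                       + ereal (lam t k * (norm (x - xP t k))\<^sup>2))
         in xf k m \<in> Xfeas P t j y \<and> (\<forall>x\<in>Xfeas P t j y. F (xf k m) \<le> F x))) \<and>
     (\<forall>k\<ge>1. \<forall>t\<in>{2..horizon P}.
        (let xn = xf k (map (sj k) [2..<t]);
             Qlow = (\<lambda>j y. Inf ((\<lambda>x. fc P t j (y, x) + Qk k (t + 1) x) ` Xfeas P t j y))
         in (\<forall>j<nreal P. pig k t j \<in> esubgrad (Qlow j) xn) \<and>
            theta k t = (\<Sum>j<nreal P. ereal (prb P t j) * Qlow j xn) \<and>
            beta k t = (\<Sum>j<nreal P. prb P t j *\<^sub>R pig k t j) \<and>
            Qk k t = (\<lambda>y. max (Qk (k - 1) t y) (theta k t + ereal (beta k t \<bullet> (y - xn))))))"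

end

theory Submission
  imports Defs
begin

text \<open>
  By downward induction on the stage, each cost-to-go function Q_t is finite, convex and bounded
  below on X_(t-1)^eps: it is an expectation of value functions of convex programs whose data are
  jointly convex in the state and the decision (H2). A SREDA cut is an expectation of affine
  minorants of value functions computed with Q_(t+1)^k in place of Q_(t+1); hence once
  Q_(t+1)^k <= Q_(t+1) is known, the new cut lies below Q_t, and induction on k and downward on t
  gives (a). Maxima of convex (resp. Lipschitz) functions with affine ones are again convex
  (resp. Lipschitz), which gives (c) and the convexity in (a).

  For (b), the value at a trial point is bounded below by a lower bound of f_t plus one of the
  first cut at stage t+1 (cuts only increase), and every affine minorant is bounded above, on the
  ball of radius eps/2 around the trial point, by the true value function, which is convex on
  X_(t-1)^eps and therefore bounded on X_(t-1)^(eps/2). An affine function bounded on a ball has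
  a bounded slope. All of this holds for every run of the algorithm, in particular almost surely.
\<close>


section \<open>Enlargements of sets\<close>

lemma enl_eq_sums: "enl S e = (\<Union>x\<in>S. \<Union>y\<in>cball 0 e. {x + y})"
  for S :: "'a::real_normed_vector set"
proof -
  have "cball x e = (\<Union>y\<in>cball 0 e. {x + y})" for x :: 'a
    using cball_translation[of x 0 e] by (simp only: add_0_right UNION_singleton_eq_range)
  then show ?thesis
    unfolding enl_def by (intro SUP_cong refl)
qed

lemma compact_enl: "compact S \<Longrightarrow> compact (enl S e)"
  for S :: "'a::euclidean_space set"
  unfolding enl_eq_sums by (intro compact_sums') auto

lemma convex_enl: "convex S \<Longrightarrow> convex (enl S e)"
  for S :: "'a::real_normed_vector set"
  unfolding enl_eq_sums by (intro convex_sums) auto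

lemma subset_enl: "0 \<le> e \<Longrightarrow> S \<subseteq> enl S e"
  unfolding enl_def by auto

lemma enl_mono: "e \<le> e' \<Longrightarrow> enl S e \<subseteq> enl S e'"
  unfolding enl_def by auto

lemma enl_subset_interior_enl: "d < e \<Longrightarrow> enl S d \<subseteq> interior (enl S e)"
proof
  fix y assume "d < e" "y \<in> enl S d"
  then obtain x where "x \<in> S" "y \<in> ball x e"
    unfolding enl_def by (auto simp: le_less_trans)
  moreover have "ball x e \<subseteq> enl S e" if "x \<in> S" for x
    using that unfolding enl_def by auto
  ultimately show "y \<in> interior (enl S e)"
    by (meson interior_maximal open_ball subsetD)
qed

section \<open>Real convex and Lipschitz functions\<close>

lemma convex_on_weighted_sum:
  assumes "finite I" "convex S" "\<And>i. i \<in> I \<Longrightarrow> 0 \<le> a i \<and> convex_on S (f i)"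
  shows "convex_on S (\<lambda>x. \<Sum>i\<in>I. a i * f i x)"
  using assms
  by (induction I rule: finite_induct) (auto simp: convex_on_const intro!: convex_on_add convex_on_cmul)

lemma convex_on_comp_snd:
  assumes "convex_on T q" "convex G" "snd ` G \<subseteq> T"
  shows "convex_on G (\<lambda>z. q (snd z))"
  using assms unfolding convex_on_def by (simp add: image_subset_iff)

lemma convex_on_INF_fibre:
  fixes F :: "'a::real_vector \<times> 'b::real_vector \<Rightarrow> real"
  assumes G: "convex G" and F: "convex_on G F" and lb: "\<And>z. z \<in> G \<Longrightarrow> c \<le> F z"
  shows "convex_on (fst ` G) (\<lambda>y. INF x\<in>{x. (y, x) \<in> G}. F (y, x))"
proof (rule convex_onI)
  show "convex (fst ` G)"
    using G by (intro convex_linear_image linear_fst)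
  define V where "V y = (INF x\<in>{x. (y, x) \<in> G}. F (y, x))" for y
  have bdd: "bdd_below ((\<lambda>x. F (y, x)) ` {x. (y, x) \<in> G})" for y
    using lb by (intro bdd_belowI2) auto
  have near_opt: "\<exists>x. (y, x) \<in> G \<and> F (y, x) < V y + d" if "y \<in> fst ` G" "0 < d" for y d
  proof -
    have "{x. (y, x) \<in> G} \<noteq> {}"
      using that(1) by force
    moreover have "V y < V y + d"
      using that(2) by simp
    ultimately show ?thesis
      unfolding V_def by (subst (asm) cINF_less_iff[OF _ bdd]) auto
  qed
  fix u :: real and y1 y2 assume u: "0 < u" "u < 1" and y: "y1 \<in> fst ` G" "y2 \<in> fst ` G"
  show "V ((1 - u) *\<^sub>R y1 + u *\<^sub>R y2) \<le> (1 - u) * V y1 + u * V y2"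
  proof (rule field_le_epsilon)
    fix d :: real assume "0 < d"
    obtain x1 x2 where x1: "(y1, x1) \<in> G" "F (y1, x1) < V y1 + d"
      and x2: "(y2, x2) \<in> G" "F (y2, x2) < V y2 + d"
      using near_opt[OF y(1) \<open>0 < d\<close>] near_opt[OF y(2) \<open>0 < d\<close>] by blast
    let ?z = "(1 - u) *\<^sub>R (y1, x1) + u *\<^sub>R (y2, x2)"
    have "?z \<in> G"
      using u x1(1) x2(1) by (intro convexD[OF G]) auto
    then have "V ((1 - u) *\<^sub>R y1 + u *\<^sub>R y2) \<le> F ?z"
      unfolding V_def by (auto intro!: cINF_lower[OF bdd])
    also have "\<dots> \<le> (1 - u) * F (y1, x1) + u * F (y2, x2)"
      using u x1(1) x2(1) by (intro convex_onD[OF F]) auto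
    also have "\<dots> \<le> (1 - u) * (V y1 + d) + u * (V y2 + d)"
      using u x1(2) x2(2) by (intro add_mono mult_left_mono) auto
    finally show "V ((1 - u) *\<^sub>R y1 + u *\<^sub>R y2) \<le> (1 - u) * V y1 + u * V y2 + d"
      by (simp add: algebra_simps)
  qed
qed

lemma convex_on_bdd_above_enl:
  fixes X :: "'a::euclidean_space set"
  assumes "compact X" "convex X" "d < e" "convex_on (enl X e) v"
  shows "\<exists>C. \<forall>y\<in>enl X d. v y \<le> C"
proof -
  let ?U = "interior (enl X e)"
  have "convex_on ?U v"
    using assms(2,4) by (meson convex_enl convex_interior convex_on_subset interior_subset)
  then have "continuous_on (enl X d) v"
    using convex_on_continuous[OF open_interior] enl_subset_interior_enl[OF assms(3)]
    by (meson continuous_on_subset)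
  then have "bounded (v ` enl X d)"
    using assms(1) by (intro compact_imp_bounded compact_continuous_image compact_enl)
  then show ?thesis
    by (meson bounded_real abs_le_D1 imageI)
qed

lemma bounded_imp_affine_bdd_below:
  fixes b y0 :: "'a::real_inner"
  assumes "bounded S"
  shows "\<exists>m. \<forall>y\<in>S. m \<le> c + b \<bullet> (y - y0)"
proof -
  obtain B where B: "\<forall>y\<in>S. norm y \<le> B"
    using assms bounded_iff by blast
  have "c - norm b * (B + norm y0) \<le> c + b \<bullet> (y - y0)" if "y \<in> S" for y
  proof -
    have "- (b \<bullet> (y - y0)) \<le> norm b * norm (y - y0)"
      using Cauchy_Schwarz_ineq2[of b "y - y0"] by linarith
    also have "\<dots> \<le> norm b * (B + norm y0)"
      using B that norm_triangle_ineq4[of y y0] by (intro mult_left_mono) auto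
    finally show ?thesis
      by linarith
  qed
  then show ?thesis
    by blast
qed

lemma norm_le_of_affine_bound_on_cball:
  fixes g x :: "'a::real_inner"
  assumes r: "0 < r" and bound: "\<forall>y\<in>cball x r. a + g \<bullet> (y - x) \<le> u"
  shows "norm g \<le> (u - a) / r"
proof (cases "g = 0")
  case True
  have "a \<le> u"
    using bound r by (metis centre_in_cball diff_self inner_zero_right add.right_neutral less_imp_le)
  then show ?thesis
    using True r by simp
next
  case False
  let ?y = "x + (r / norm g) *\<^sub>R g"
  have "?y \<in> cball x r"
    using r False by (simp add: dist_norm)
  then have "a + g \<bullet> (?y - x) \<le> u"
    using bound by blast
  moreover have "g \<bullet> (?y - x) = r * norm g"
    using False by (simp add: power2_norm_eq_inner[symmetric] power2_eq_square)
  ultimately show ?thesis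
    using r by (simp add: pos_le_divide_eq mult.commute)
qed

lemma lipschitz_on_max:
  fixes f g :: "'a::metric_space \<Rightarrow> real"
  assumes "lipschitz_on L S f" "lipschitz_on M S g"
  shows "lipschitz_on (max L M) S (\<lambda>x. max (f x) (g x))"
proof (rule lipschitz_onI)
  show "0 \<le> max L M"
    using lipschitz_on_nonneg[OF assms(1)] by simp
  fix x y assume "x \<in> S" "y \<in> S"
  then have "dist (f x) (f y) \<le> max L M * dist x y" "dist (g x) (g y) \<le> max L M * dist x y"
    using assms by (meson lipschitz_on_le max.cobounded1 max.cobounded2 lipschitz_onD)+
  then show "dist (max (f x) (g x)) (max (f y) (g y)) \<le> max L M * dist x y"
    unfolding dist_real_def by linarith
qed

lemma lipschitz_on_affine: "lipschitz_on (norm b) S (\<lambda>y. c + b \<bullet> (y - y0))"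
proof (rule lipschitz_onI)
  fix x y
  have "dist (c + b \<bullet> (x - y0)) (c + b \<bullet> (y - y0)) = \<bar>b \<bullet> (x - y)\<bar>"
    by (simp add: dist_real_def inner_diff_right)
  also have "\<dots> \<le> norm b * dist x y"
    by (simp add: Cauchy_Schwarz_ineq2 dist_norm)
  finally show "dist (c + b \<bullet> (x - y0)) (c + b \<bullet> (y - y0)) \<le> norm b * dist x y" .
qed simp

section \<open>Extended-real-valued functions\<close>

lemma elsc_bdd_below_on_compact:
  fixes f :: "'a::heine_borel \<Rightarrow> ereal"
  assumes K: "compact K" and lsc: "elsc f" and no_minf: "\<forall>z\<in>K. f z \<noteq> -\<infinity>"
  shows "\<exists>c. \<forall>z\<in>K. ereal c \<le> f z"
proof (rule ccontr)
  assume unbdd: "\<nexists>c. \<forall>z\<in>K. ereal c \<le> f z"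
  define F where "F n = K \<inter> {z. f z \<le> ereal (- real n)}" for n :: nat
  have "\<Inter>(range F) \<noteq> {}"
  proof (rule compact_nest)
    show "compact (F n)" for n
      unfolding F_def using K lsc elsc_def by (blast intro: compact_Int_closed)
    show "F n \<noteq> {}" for n
      using unbdd unfolding F_def by (auto simp: not_le intro: less_imp_le)
    show "F n \<subseteq> F m" if "m \<le> n" for m n
      using that unfolding F_def by (auto elim!: order_trans)
  qed
  then obtain z where "z \<in> K" and below: "\<And>n. f z \<le> ereal (- real n)"
    unfolding F_def by blast
  then obtain r where "f z = ereal r"
    using no_minf below[of 0] by (cases "f z") auto
  moreover obtain n :: nat where "- r < real n"
    using reals_Archimedean2 by blast
  ultimately show False
    using below[of n] by simp
qed

lemma econvex_imp_convex_on:
  assumes "econvex f" "convex S" "\<forall>x\<in>S. f x = ereal (g x)"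
  shows "convex_on S g"
proof (rule convex_onI[OF _ assms(2)])
  fix u :: real and x y assume "0 < u" "u < 1" "x \<in> S" "y \<in> S"
  then have "(1 - u) *\<^sub>R (x, g x) + u *\<^sub>R (y, g y) \<in> {(x, r). f x \<le> ereal r}"
    using assms(1,3) unfolding econvex_def by (intro convexD) auto
  then show "g ((1 - u) *\<^sub>R x + u *\<^sub>R y) \<le> (1 - u) * g x + u * g y"
    using assms(2,3) \<open>x \<in> S\<close> \<open>y \<in> S\<close> \<open>0 < u\<close> \<open>u < 1\<close>
    by (simp add: convexD)
qed

lemma econvex_const: "econvex (\<lambda>_. c)"
proof (cases c)
  case (real a)
  then have "{(x, r). c \<le> ereal r} = UNIV \<times> {a..}"
    by auto
  then show ?thesis
    unfolding econvex_def by (metis convex_Times convex_UNIV convex_real_interval(1))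
qed (simp_all add: econvex_def)

lemma econvex_affine: "econvex (\<lambda>y. ereal (c + b \<bullet> (y - y0)))"
proof -
  have "{(y, r). ereal (c + b \<bullet> (y - y0)) \<le> ereal r} = {z. (b, -1) \<bullet> z \<le> b \<bullet> y0 - c}"
    by (auto simp: inner_diff_right)
  then show ?thesis
    unfolding econvex_def by (simp add: convex_halfspace_le)
qed

lemma econvex_max:
  assumes "econvex f" "econvex g"
  shows "econvex (\<lambda>x. max (f x) (g x))"
proof -
  have "{(x, r). max (f x) (g x) \<le> ereal r} = {(x, r). f x \<le> ereal r} \<inter> {(x, r). g x \<le> ereal r}"
    by auto
  then show ?thesis
    using assms unfolding econvex_def by (simp add: convex_Int)
qed

definition lipschitz_ereal_on :: "'a::metric_space set \<Rightarrow> ('a \<Rightarrow> ereal) \<Rightarrow> bool" where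
  "lipschitz_ereal_on S f \<longleftrightarrow> (\<exists>L q. lipschitz_on L S q \<and> (\<forall>x\<in>S. f x = ereal (q x)))"

lemma lipschitz_ereal_on_const: "lipschitz_ereal_on S (\<lambda>_. ereal c)"
  unfolding lipschitz_ereal_on_def using lipschitz_on_constant by blast

lemma lipschitz_ereal_on_affine: "lipschitz_ereal_on S (\<lambda>y. ereal (c + b \<bullet> (y - y0)))"
  unfolding lipschitz_ereal_on_def using lipschitz_on_affine by blast

lemma lipschitz_ereal_on_max_affine:
  assumes "lipschitz_ereal_on S f"
  shows "lipschitz_ereal_on S (\<lambda>y. max (f y) (ereal (c + b \<bullet> (y - y0))))"
proof -
  obtain L q where "lipschitz_on L S q" "\<forall>x\<in>S. f x = ereal (q x)"
    using assms unfolding lipschitz_ereal_on_def by blast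
  then have "lipschitz_on (max L (norm b)) S (\<lambda>y. max (q y) (c + b \<bullet> (y - y0)))"
    by (intro lipschitz_on_max lipschitz_on_affine)
  moreover have "\<forall>x\<in>S. max (f x) (ereal (c + b \<bullet> (x - y0))) = ereal (max (q x) (c + b \<bullet> (x - y0)))"
    using \<open>\<forall>x\<in>S. f x = ereal (q x)\<close> by (simp add: max_def)
  ultimately show ?thesis
    unfolding lipschitz_ereal_on_def by blast
qed

definition convex_bdd_below_on :: "'a::real_vector set \<Rightarrow> ('a \<Rightarrow> ereal) \<Rightarrow> bool" where
  "convex_bdd_below_on S f \<longleftrightarrow>
     (\<exists>q. (\<forall>y\<in>S. f y = ereal (q y)) \<and> bdd_below (q ` S) \<and> convex_on S q)"

lemma convex_bdd_below_on_cong: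
  "(\<And>y. y \<in> S \<Longrightarrow> f y = g y) \<Longrightarrow> convex_bdd_below_on S f \<longleftrightarrow> convex_bdd_below_on S g"
  unfolding convex_bdd_below_on_def by simp

lemma convex_bdd_below_on_INF_fibre:
  fixes F :: "'a::real_vector \<times> 'b::real_vector \<Rightarrow> real"
  assumes G: "convex G" and F: "convex_on G F" and lb: "\<And>z. z \<in> G \<Longrightarrow> c \<le> F z"
  shows "convex_bdd_below_on (fst ` G) (\<lambda>y. INF x\<in>{x. (y, x) \<in> G}. ereal (F (y, x)))"
proof -
  let ?V = "\<lambda>y. INF x\<in>{x. (y, x) \<in> G}. F (y, x)"
  have "(INF x\<in>{x. (y, x) \<in> G}. ereal (F (y, x))) = ereal (?V y)" and "c \<le> ?V y"
    if "y \<in> fst ` G" for y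
  proof -
    have ne: "{x. (y, x) \<in> G} \<noteq> {}"
      using that by force
    have "bdd_below ((\<lambda>x. F (y, x)) ` {x. (y, x) \<in> G})"
      using lb by (intro bdd_belowI2) auto
    then show "(INF x\<in>{x. (y, x) \<in> G}. ereal (F (y, x))) = ereal (?V y)"
      using ereal_Inf' ne by (simp add: image_comp)
    show "c \<le> ?V y"
      using ne lb by (intro cINF_greatest) auto
  qed
  then show ?thesis
    unfolding convex_bdd_below_on_def using convex_on_INF_fibre[OF G F lb]
    by (intro exI[of _ ?V] conjI bdd_belowI2) auto
qed

lemma convex_bdd_below_on_subset:
  assumes "convex_bdd_below_on S f" "T \<subseteq> S" "convex T"
  shows "convex_bdd_below_on T f"
proof -
  obtain q where "\<forall>y\<in>S. f y = ereal (q y)" "bdd_below (q ` S)" "convex_on S q"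
    using assms(1) unfolding convex_bdd_below_on_def by blast
  then show ?thesis
    unfolding convex_bdd_below_on_def using assms(2,3)
    by (intro exI[of _ q] conjI) (auto intro: bdd_below_mono[OF _ image_mono] convex_on_subset)
qed

lemma convex_bdd_below_on_weighted_sum:
  assumes "finite I" "convex S" "\<And>i. i \<in> I \<Longrightarrow> 0 \<le> p i \<and> convex_bdd_below_on S (f i)"
  shows "convex_bdd_below_on S (\<lambda>y. \<Sum>i\<in>I. ereal (p i) * f i y)"
proof -
  have "\<exists>q c. (\<forall>y\<in>S. f i y = ereal (q y) \<and> c \<le> q y) \<and> convex_on S q" if "i \<in> I" for i
    using assms(3)[OF that] unfolding convex_bdd_below_on_def bdd_below_def by fast
  then obtain q c where q: "\<And>i. i \<in> I \<Longrightarrow>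
      (\<forall>y\<in>S. f i y = ereal (q i y) \<and> c i \<le> q i y) \<and> convex_on S (q i)"
    by metis
  have "(\<Sum>i\<in>I. ereal (p i) * f i y) = ereal (\<Sum>i\<in>I. p i * q i y)" if "y \<in> S" for y
  proof -
    have "(\<Sum>i\<in>I. ereal (p i) * f i y) = (\<Sum>i\<in>I. ereal (p i * q i y))"
      using q that by (intro sum.cong) auto
    then show ?thesis
      by simp
  qed
  moreover have "(\<Sum>i\<in>I. p i * c i) \<le> (\<Sum>i\<in>I. p i * q i y)" if "y \<in> S" for y
    using q assms(3) that by (intro sum_mono mult_left_mono) auto
  moreover have "convex_on S (\<lambda>y. \<Sum>i\<in>I. p i * q i y)"
    using q assms by (intro convex_on_weighted_sum) auto
  ultimately show ?thesis
    unfolding convex_bdd_below_on_def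
    by (intro exI[of _ "\<lambda>y. \<Sum>i\<in>I. p i * q i y"] conjI bdd_belowI2) auto
qed

section \<open>Value functions of the stage problems\<close>

lemma Xst_eq_Xc: "1 \<le> t \<Longrightarrow> Xst P t = Xc P t"
  by (simp add: Xst_def)

lemma Xfeas_subset: "Xfeas P t j y \<subseteq> Xc P t"
  by (auto simp: Xfeas_def)

lemma convex_Xfeas_graph:
  assumes X: "convex (Xc P t)" and g: "\<And>i. convex_on UNIV (\<lambda>z. gc P t j z $ i)"
  shows "convex {(y, x). x \<in> Xfeas P t j y}"
proof (rule convexI, clarsimp)
  fix y1 x1 y2 x2 and u v :: real
  assume feas: "x1 \<in> Xfeas P t j y1" "x2 \<in> Xfeas P t j y2" and uv: "0 \<le> u" "0 \<le> v" "u + v = 1"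
  let ?y = "u *\<^sub>R y1 + v *\<^sub>R y2" and ?x = "u *\<^sub>R x1 + v *\<^sub>R x2"
  have "?x \<in> Xc P t"
    using feas uv Xfeas_subset by (blast intro: convexD[OF X])
  moreover have "gc P t j (?y, ?x) $ i \<le> 0" for i
  proof -
    have "gc P t j (u *\<^sub>R (y1, x1) + v *\<^sub>R (y2, x2)) $ i
            \<le> u * gc P t j (y1, x1) $ i + v * gc P t j (y2, x2) $ i"
      using g[of i] uv unfolding convex_on_def by blast
    moreover have "gc P t j (y1, x1) $ i \<le> 0" "gc P t j (y2, x2) $ i \<le> 0"
      using feas unfolding Xfeas_def by auto
    ultimately show ?thesis
      using uv by (simp add: add_nonpos_nonpos mult_nonneg_nonpos order_trans)
  qed
  moreover have "Ac P t j *v ?x + Bc P t j *v ?y = bc P t j"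
  proof -
    have "Ac P t j *v ?x + Bc P t j *v ?y
        = u *\<^sub>R (Ac P t j *v x1 + Bc P t j *v y1) + v *\<^sub>R (Ac P t j *v x2 + Bc P t j *v y2)"
      by (simp add: matrix_vector_right_distrib matrix_vector_mult_scaleR algebra_simps)
    then show ?thesis
      using feas uv unfolding Xfeas_def by (simp flip: scaleR_add_left)
  qed
  ultimately show "?x \<in> Xfeas P t j ?y"
    unfolding Xfeas_def by blast
qed

lemma H1_horizon: "H1 P \<Longrightarrow> 1 \<le> horizon P"
  by (simp add: H1_def)

lemma H1_prb_nonneg: "H1 P \<Longrightarrow> 2 \<le> t \<Longrightarrow> t \<le> horizon P \<Longrightarrow> j < nreal P \<Longrightarrow> 0 \<le> prb P t j"
  unfolding H1_def by (auto intro: less_imp_le)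

lemma H2_eps_pos: "H2 P eps \<Longrightarrow> 0 < eps"
  by (simp add: H2_def)

lemma
  assumes "H2 P eps" "1 \<le> t" "t \<le> horizon P"
  shows H2_compact: "compact (Xc P t)" and H2_convex: "convex (Xc P t)"
  using assms by (auto simp: H2_def)

lemma
  assumes "H2 P eps" "2 \<le> t" "t \<le> horizon P" "j < nreal P"
  shows H2_cost: "eproper (fc P t j) \<and> econvex (fc P t j) \<and> elsc (fc P t j)"
    and H2_constraint_convex: "convex_on UNIV (\<lambda>z. gc P t j z $ i)"
    and H2_cost_dom: "enl (Xc P (t - 1)) eps \<times> Xc P t \<subseteq> edom (fc P t j)"
    and H2_feasible: "y \<in> enl (Xc P (t - 1)) eps \<Longrightarrow> Xfeas P t j y \<noteq> {}"
proof -
  have "t \<in> {1..horizon P}" "j \<in> supp P t" "Xst P (t - 1) = Xc P (t - 1)"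
    using assms(2-4) by (auto simp: supp_def Xst_def)
  with assms(1) show "eproper (fc P t j) \<and> econvex (fc P t j) \<and> elsc (fc P t j)"
    and "convex_on UNIV (\<lambda>z. gc P t j z $ i)"
    and "enl (Xc P (t - 1)) eps \<times> Xc P t \<subseteq> edom (fc P t j)"
    and "y \<in> enl (Xc P (t - 1)) eps \<Longrightarrow> Xfeas P t j y \<noteq> {}"
    unfolding H2_def by metis+
qed

text \<open>With \<open>N = Qcal P (t + 1)\<close> this is the value of stage \<open>t\<close> under realization \<open>j\<close> in the
  dynamic programming equations; with \<open>N = Q\<^sub>t\<^sub>+\<^sub>1\<^sup>k\<close> it is the function whose subgradients
  the backward pass of SREDA uses.\<close>

definition stage_value ::
  "('n::finite,'m::finite,'c::finite) msp \<Rightarrow> nat \<Rightarrow> nat \<Rightarrow> (real^'n \<Rightarrow> ereal) \<Rightarrow> real^'n \<Rightarrow> ereal"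
  where "stage_value P t j N y = Inf ((\<lambda>x. fc P t j (y, x) + N x) ` Xfeas P t j y)"

lemma stage_value_mono:
  assumes "\<forall>x\<in>Xc P t. N x \<le> N' x"
  shows "stage_value P t j N y \<le> stage_value P t j N' y"
  unfolding stage_value_def
  using assms Xfeas_subset by (intro INF_mono) (blast intro: add_left_mono)

context
  fixes P :: "('n::finite,'m::finite,'c::finite) msp" and eps :: real and t j :: nat
  assumes h2: "H2 P eps" and stage: "2 \<le> t" "t \<le> horizon P" and j: "j < nreal P"
begin

lemma stage_cost_bdd_below: "\<exists>c. \<forall>z\<in>enl (Xc P (t - 1)) eps \<times> Xc P t. ereal c \<le> fc P t j z"
proof (rule elsc_bdd_below_on_compact)
  show "compact (enl (Xc P (t - 1)) eps \<times> Xc P t)"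
    using h2 stage by (intro compact_Times compact_enl) (auto intro: H2_compact)
qed (use H2_cost[OF h2 stage j] in \<open>auto simp: eproper_def\<close>)

lemma stage_cost_real: "z \<in> enl (Xc P (t - 1)) eps \<times> Xc P t \<Longrightarrow> \<exists>r. fc P t j z = ereal r"
  using H2_cost_dom[OF h2 stage j] H2_cost[OF h2 stage j]
  by (cases "fc P t j z") (auto simp: edom_def eproper_def)

lemma convex_feasible_graph: "convex {(y, x). y \<in> enl (Xc P (t - 1)) eps \<and> x \<in> Xfeas P t j y}"
proof -
  have "{(y, x). y \<in> enl (Xc P (t - 1)) eps \<and> x \<in> Xfeas P t j y}
      = (enl (Xc P (t - 1)) eps \<times> UNIV) \<inter> {(y, x). x \<in> Xfeas P t j y}"
    by auto
  moreover have "convex (enl (Xc P (t - 1)) eps)"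
    using h2 stage by (intro convex_enl H2_convex) auto
  moreover have "convex {(y, x). x \<in> Xfeas P t j y}"
    using h2 stage j by (intro convex_Xfeas_graph H2_convex H2_constraint_convex) auto
  ultimately show ?thesis
    by (simp add: convex_Int convex_Times)
qed

lemma convex_bdd_below_on_stage_value:
  assumes "convex_bdd_below_on (Xc P t) N"
  shows "convex_bdd_below_on (enl (Xc P (t - 1)) eps) (stage_value P t j N)"
proof -
  let ?E = "enl (Xc P (t - 1)) eps"
  define G where "G = {(y, x). y \<in> ?E \<and> x \<in> Xfeas P t j y}"
  obtain q where q: "\<forall>x\<in>Xc P t. N x = ereal (q x)" "bdd_below (q ` Xc P t)" "convex_on (Xc P t) q"
    using assms unfolding convex_bdd_below_on_def by blast
  obtain cq where cq: "\<And>x. x \<in> Xc P t \<Longrightarrow> cq \<le> q x"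
    using q(2) by (auto simp: bdd_below_def)
  obtain cf where cf: "\<forall>z\<in>?E \<times> Xc P t. ereal cf \<le> fc P t j z"
    using stage_cost_bdd_below by blast
  obtain fr where fr: "\<forall>z\<in>?E \<times> Xc P t. fc P t j z = ereal (fr z)"
    using stage_cost_real by metis
  have GE: "G \<subseteq> ?E \<times> Xc P t"
    unfolding G_def using Xfeas_subset by blast
  define F where "F z = fr z + q (snd z)" for z
  have "convex_on G fr"
    using H2_cost[OF h2 stage j] fr GE convex_feasible_graph unfolding G_def
    by (intro econvex_imp_convex_on) auto
  moreover have "convex_on G (\<lambda>z. q (snd z))"
    using q(3) convex_feasible_graph GE unfolding G_def by (intro convex_on_comp_snd) auto
  ultimately have "convex_on G F"
    unfolding F_def by (rule convex_on_add)
  moreover have "cf + cq \<le> F z" if "z \<in> G" for z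
    using that GE cf cq fr unfolding F_def by force
  ultimately have marginal: "convex_bdd_below_on (fst ` G) (\<lambda>y. INF x\<in>{x. (y, x) \<in> G}. ereal (F (y, x)))"
    using convex_feasible_graph unfolding G_def by (intro convex_bdd_below_on_INF_fibre) auto
  have fst_G: "fst ` G = ?E"
    using H2_feasible[OF h2 stage j] unfolding G_def by force
  have value_eq: "stage_value P t j N y = (INF x\<in>{x. (y, x) \<in> G}. ereal (F (y, x)))" if "y \<in> ?E" for y
  proof -
    have "fc P t j (y, x) + N x = ereal (F (y, x))" if "x \<in> Xfeas P t j y" for x
    proof -
      have "x \<in> Xc P t"
        using that Xfeas_subset by blast
      then show ?thesis
        using \<open>y \<in> ?E\<close> fr q(1) unfolding F_def by simp
    qed
    then show ?thesis
      unfolding stage_value_def G_def using that by (intro INF_cong) auto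
  qed
  show ?thesis
    using marginal convex_bdd_below_on_cong[of ?E, OF value_eq] unfolding fst_G by simp
qed

end

lemma convex_bdd_below_on_restrict_enl:
  assumes "convex_bdd_below_on (enl (Xc P t) eps) f" "H2 P eps" "1 \<le> t" "t \<le> horizon P"
  shows "convex_bdd_below_on (Xc P t) f"
proof (rule convex_bdd_below_on_subset[OF assms(1)])
  show "Xc P t \<subseteq> enl (Xc P t) eps"
    using H2_eps_pos[OF assms(2)] by (simp add: subset_enl)
  show "convex (Xc P t)"
    using assms(2-4) by (rule H2_convex)
qed

lemma Qcal_last: "Qcal P (horizon P + 1) = (\<lambda>_. 0)"
  by (simp add: Qcal_def fun_eq_iff)

lemma Qcal_unfold:
  assumes "2 \<le> t" "t \<le> horizon P"
  shows "Qcal P t y = (\<Sum>j<nreal P. ereal (prb P t j) * stage_value P t j (Qcal P (t + 1)) y)"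
proof -
  have "horizon P + 1 - t = Suc (horizon P - t)" "horizon P - (horizon P - t) = t"
    using assms by simp_all
  then show ?thesis
    using assms by (simp add: Qcal_def supp_def pr_def stage_value_def)
qed

lemma convex_bdd_below_on_Qcal:
  assumes h1: "H1 P" and h2: "H2 P eps" and t: "2 \<le> t" "t \<le> horizon P + 1"
  shows "convex_bdd_below_on (enl (Xc P (t - 1)) eps) (Qcal P t)"
  using t(2) t(1)
proof (induction t rule: inc_induct)
  case base
  have "convex (enl (Xc P (horizon P)) eps)"
    using h2 H1_horizon[OF h1] by (intro convex_enl H2_convex) auto
  then show ?case
    unfolding convex_bdd_below_on_def Qcal_last
    by (intro exI[of _ "\<lambda>_. 0"]) (auto simp: zero_ereal_def convex_on_const)
next
  case (step n)
  then have n: "2 \<le> n" "n \<le> horizon P"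
    by auto
  have "convex_bdd_below_on (enl (Xc P n) eps) (Qcal P (n + 1))"
    using step.IH n by simp
  then have next_stage: "convex_bdd_below_on (Xc P n) (Qcal P (n + 1))"
    using h2 n by (intro convex_bdd_below_on_restrict_enl) auto
  have "convex_bdd_below_on (enl (Xc P (n - 1)) eps)
      (\<lambda>y. \<Sum>j<nreal P. ereal (prb P n j) * stage_value P n j (Qcal P (n + 1)) y)"
  proof (rule convex_bdd_below_on_weighted_sum)
    show "convex (enl (Xc P (n - 1)) eps)"
      using h2 n by (intro convex_enl H2_convex) auto
    show "0 \<le> prb P n j \<and> convex_bdd_below_on (enl (Xc P (n - 1)) eps)
        (stage_value P n j (Qcal P (n + 1)))" if "j \<in> {..<nreal P}" for j
      using that H1_prb_nonneg[OF h1 n] convex_bdd_below_on_stage_value[OF h2 n _ next_stage]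
      by simp
  qed simp
  then show ?case
    by (simp add: Qcal_unfold[OF n])
qed

lemma stage_value_Qcal_bdd_above:
  assumes h1: "H1 P" and h2: "H2 P eps" and t: "2 \<le> t" "t \<le> horizon P" and j: "j < nreal P"
  shows "\<exists>u. \<forall>y\<in>enl (Xc P (t - 1)) (eps / 2). stage_value P t j (Qcal P (t + 1)) y \<le> ereal u"
proof -
  have "convex_bdd_below_on (enl (Xc P t) eps) (Qcal P (t + 1))"
    using convex_bdd_below_on_Qcal[OF h1 h2, of "t + 1"] t by simp
  then have "convex_bdd_below_on (Xc P t) (Qcal P (t + 1))"
    using h2 t by (intro convex_bdd_below_on_restrict_enl) auto
  then obtain v where v: "\<forall>y\<in>enl (Xc P (t - 1)) eps. stage_value P t j (Qcal P (t + 1)) y = ereal (v y)"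
      and cvx: "convex_on (enl (Xc P (t - 1)) eps) v"
    using convex_bdd_below_on_stage_value[OF h2 t j] unfolding convex_bdd_below_on_def by blast
  have "compact (Xc P (t - 1))" "convex (Xc P (t - 1))"
    using h2 t by (auto intro: H2_compact H2_convex)
  moreover have "eps / 2 < eps"
    using H2_eps_pos[OF h2] by simp
  ultimately obtain u where u: "\<forall>y\<in>enl (Xc P (t - 1)) (eps / 2). v y \<le> u"
    using convex_on_bdd_above_enl[OF _ _ _ cvx] by blast
  have "enl (Xc P (t - 1)) (eps / 2) \<subseteq> enl (Xc P (t - 1)) eps"
    using H2_eps_pos[OF h2] by (intro enl_mono) simp
  with u v have "\<forall>y\<in>enl (Xc P (t - 1)) (eps / 2). stage_value P t j (Qcal P (t + 1)) y \<le> ereal u"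
    by auto
  then show ?thesis ..
qed

section \<open>Runs of SREDA\<close>

text \<open>Of the forward pass only the feasibility of the trial points is used: neither their
  optimality nor the proximal weights \<open>lam\<close> and centres \<open>xP\<close> matter for the theorem.\<close>

locale sreda_trajectory =
  fixes P :: "('n::finite,'m::finite,'c::finite) msp" and eps :: real
    and lam :: "nat \<Rightarrow> nat \<Rightarrow> real" and xP :: "nat \<Rightarrow> nat \<Rightarrow> real^'n"
    and Q0 :: "nat \<Rightarrow> real^'n \<Rightarrow> ereal"
    and xf :: "nat \<Rightarrow> nat list \<Rightarrow> real^'n" and sj :: "nat \<Rightarrow> nat \<Rightarrow> nat"
    and Qk :: "nat \<Rightarrow> nat \<Rightarrow> real^'n \<Rightarrow> ereal" and pig :: "nat \<Rightarrow> nat \<Rightarrow> nat \<Rightarrow> real^'n"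
    and theta :: "nat \<Rightarrow> nat \<Rightarrow> ereal" and beta :: "nat \<Rightarrow> nat \<Rightarrow> real^'n"
  assumes h1: "H1 P" and h2: "H2 P eps"
    and Q0: "\<forall>t\<in>{2..horizon P}. (\<forall>x. Q0 t x = -\<infinity>) \<or>
               (econvex (Q0 t) \<and>
                (\<exists>L q. lipschitz_on L (enl (Xst P (t - 1)) eps) q \<and>
                       (\<forall>x\<in>enl (Xst P (t - 1)) eps. Q0 t x = ereal (q x))) \<and>
                (\<forall>x\<in>enl (Xst P (t - 1)) eps. Q0 t x \<le> Qcal P t x))"
    and run: "sreda_run P lam xP Q0 xf sj Qk pig theta beta"
begin

lemma Qk_initial: "t \<in> {2..horizon P} \<Longrightarrow> Qk 0 t = Q0 t"
  using run unfolding sreda_run_def by blast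

lemma Qk_last: "Qk k (horizon P + 1) = (\<lambda>_. 0)"
  using run unfolding sreda_run_def by blast

lemma Q0_cases:
  assumes t: "t \<in> {2..horizon P}"
  obtains "Qk 0 t = (\<lambda>_. -\<infinity>)"
  | "econvex (Qk 0 t)"
    "lipschitz_ereal_on (enl (Xc P (t - 1)) eps) (Qk 0 t)"
    "\<forall>x\<in>enl (Xc P (t - 1)) eps. Qk 0 t x \<le> Qcal P t x"
proof -
  have X: "Xst P (t - 1) = Xc P (t - 1)"
    using t by (intro Xst_eq_Xc) auto
  have "(\<forall>x. Qk 0 t x = -\<infinity>) \<or> (econvex (Qk 0 t) \<and>
      lipschitz_ereal_on (enl (Xc P (t - 1)) eps) (Qk 0 t) \<and>
      (\<forall>x\<in>enl (Xc P (t - 1)) eps. Qk 0 t x \<le> Qcal P t x))"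
    using bspec[OF Q0 t] unfolding X lipschitz_ereal_on_def Qk_initial[OF t] .
  then show ?thesis
    using that by (auto simp: fun_eq_iff)
qed

definition trial :: "nat \<Rightarrow> nat \<Rightarrow> real^'n" where
  "trial k t = xf k (map (sj k) [2..<t])"

lemma trial_in_Xc:
  assumes "1 \<le> k" "2 \<le> t" "t \<le> horizon P"
  shows "trial k t \<in> Xc P (t - 1)"
proof -
  let ?m = "map (sj k) [2..<t]"
  have "length ?m + 1 \<le> horizon P \<and> set ?m \<subseteq> {..<nreal P}"
    using run assms unfolding sreda_run_def by auto
  then have "xf k ?m \<in> Xfeas P (length ?m + 1) (if ?m = [] then 0 else last ?m)
      (if ?m = [] then x0 P else xf k (butlast ?m))"
    using run assms(1) unfolding sreda_run_def Let_def by blast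
  moreover have "length ?m + 1 = t - 1"
    using assms(2) by simp
  ultimately show ?thesis
    unfolding trial_def using Xfeas_subset by fastforce
qed

lemma backward_pass:
  assumes "1 \<le> k" "2 \<le> t" "t \<le> horizon P"
  shows "\<forall>j<nreal P. pig k t j \<in> esubgrad (stage_value P t j (Qk k (t + 1))) (trial k t)"
    and "theta k t = (\<Sum>j<nreal P. ereal (prb P t j) * stage_value P t j (Qk k (t + 1)) (trial k t))"
    and "beta k t = (\<Sum>j<nreal P. prb P t j *\<^sub>R pig k t j)"
    and "Qk k t = (\<lambda>y. max (Qk (k - 1) t y) (theta k t + ereal (beta k t \<bullet> (y - trial k t))))"
proof -
  have "t \<in> {2..horizon P}"
    using assms by simp
  note run[unfolded sreda_run_def, THEN conjunct2, THEN conjunct2, THEN conjunct2,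
      THEN conjunct2, rule_format, OF assms(1) this, unfolded Let_def,
      folded stage_value_def trial_def]
  then show "\<forall>j<nreal P. pig k t j \<in> esubgrad (stage_value P t j (Qk k (t + 1))) (trial k t)"
    and "theta k t = (\<Sum>j<nreal P. ereal (prb P t j) * stage_value P t j (Qk k (t + 1)) (trial k t))"
    and "beta k t = (\<Sum>j<nreal P. prb P t j *\<^sub>R pig k t j)"
    and "Qk k t = (\<lambda>y. max (Qk (k - 1) t y) (theta k t + ereal (beta k t \<bullet> (y - trial k t))))"
    by blast+
qed

text \<open>These values are finite (\<open>stage_value_trial\<close>): a subgradient exists only at points
  of finite value, so \<open>real_of_ereal\<close> loses nothing here.\<close>

definition trial_value :: "nat \<Rightarrow> nat \<Rightarrow> nat \<Rightarrow> real" where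
  "trial_value k t j = real_of_ereal (stage_value P t j (Qk k (t + 1)) (trial k t))"

definition cutting_plane :: "nat \<Rightarrow> nat \<Rightarrow> real^'n \<Rightarrow> real" where
  "cutting_plane k t y = (\<Sum>j<nreal P. prb P t j * trial_value k t j) + beta k t \<bullet> (y - trial k t)"

context
  fixes k t :: nat
  assumes k: "1 \<le> k" and t: "2 \<le> t" "t \<le> horizon P"
begin

lemma stage_value_trial:
  "j < nreal P \<Longrightarrow> stage_value P t j (Qk k (t + 1)) (trial k t) = ereal (trial_value k t j)"
  using backward_pass(1)[OF k t] unfolding esubgrad_def trial_value_def
  by (cases "stage_value P t j (Qk k (t + 1)) (trial k t)") auto

lemma subgradient_inequality:
  assumes "j < nreal P"
  shows "ereal (trial_value k t j + pig k t j \<bullet> (y - trial k t)) \<le> stage_value P t j (Qk k (t + 1)) y"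
  using backward_pass(1)[OF k t] assms stage_value_trial[OF assms] unfolding esubgrad_def by auto

lemma theta_eq: "theta k t = ereal (\<Sum>j<nreal P. prb P t j * trial_value k t j)"
  unfolding backward_pass(2)[OF k t] sum_ereal[symmetric] times_ereal.simps(1)[symmetric]
  by (intro sum.cong refl, subst stage_value_trial) auto

lemma cutting_plane_le_expected_stage_value:
  "ereal (cutting_plane k t y) \<le> (\<Sum>j<nreal P. ereal (prb P t j) * stage_value P t j (Qk k (t + 1)) y)"
proof -
  have "cutting_plane k t y = (\<Sum>j<nreal P. prb P t j * (trial_value k t j + pig k t j \<bullet> (y - trial k t)))"
    unfolding cutting_plane_def backward_pass(3)[OF k t]
    by (simp add: inner_sum_left sum.distrib distrib_left)
  then have "ereal (cutting_plane k t y)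
      = (\<Sum>j<nreal P. ereal (prb P t j) * ereal (trial_value k t j + pig k t j \<bullet> (y - trial k t)))"
    by simp
  also have "\<dots> \<le> (\<Sum>j<nreal P. ereal (prb P t j) * stage_value P t j (Qk k (t + 1)) y)"
    using subgradient_inequality H1_prb_nonneg[OF h1 t]
    by (intro sum_mono ereal_mult_left_mono) auto
  finally show ?thesis .
qed

lemma cutting_plane_le_Qcal:
  assumes "\<forall>x\<in>Xc P t. Qk k (t + 1) x \<le> Qcal P (t + 1) x"
  shows "ereal (cutting_plane k t y) \<le> Qcal P t y"
proof -
  have "ereal (cutting_plane k t y) \<le> (\<Sum>j<nreal P. ereal (prb P t j) * stage_value P t j (Qk k (t + 1)) y)"
    by (rule cutting_plane_le_expected_stage_value)
  also have "\<dots> \<le> (\<Sum>j<nreal P. ereal (prb P t j) * stage_value P t j (Qcal P (t + 1)) y)"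
    using assms H1_prb_nonneg[OF h1 t]
    by (intro sum_mono ereal_mult_left_mono stage_value_mono) auto
  also have "\<dots> = Qcal P t y"
    by (simp add: Qcal_unfold[OF t])
  finally show ?thesis .
qed

end

lemma Qk_Suc:
  assumes "2 \<le> t" "t \<le> horizon P"
  shows "Qk (Suc k) t = (\<lambda>y. max (Qk k t y) (ereal (cutting_plane (Suc k) t y)))"
  using backward_pass(4)[of "Suc k" t] theta_eq[of "Suc k" t] assms
  unfolding cutting_plane_def by simp

lemma Qk_econvex: "t \<in> {2..horizon P + 1} \<Longrightarrow> econvex (Qk k t)"
proof (induction k)
  case 0
  show ?case
  proof (cases "t = horizon P + 1")
    case True
    then show ?thesis
      using Qk_last econvex_const by simp
  next
    case False
    with 0 have "t \<in> {2..horizon P}"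
      by auto
    then show ?thesis
      by (cases rule: Q0_cases) (simp_all add: econvex_const)
  qed
next
  case (Suc k)
  show ?case
  proof (cases "t = horizon P + 1")
    case True
    then show ?thesis
      using Qk_last econvex_const by simp
  next
    case False
    with Suc.prems have t: "2 \<le> t" "t \<le> horizon P"
      by auto
    show ?thesis
      unfolding Qk_Suc[OF t] cutting_plane_def
      by (intro econvex_max Suc.IH[OF Suc.prems] econvex_affine)
  qed
qed

lemma Qk_le_Qcal:
  "t \<in> {2..horizon P + 1} \<Longrightarrow> y \<in> enl (Xc P (t - 1)) eps \<Longrightarrow> Qk k t y \<le> Qcal P t y"
proof (induction k arbitrary: t y)
  case 0
  show ?case
  proof (cases "t = horizon P + 1")
    case True
    then show ?thesis
      using Qk_last Qcal_last[of P] by simp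
  next
    case False
    with 0 have "t \<in> {2..horizon P}"
      by auto
    then show ?thesis
      using 0 by (cases rule: Q0_cases) auto
  qed
next
  case (Suc k)
  have "Qk (Suc k) t y \<le> Qcal P t y"
    if "2 \<le> t" "t \<le> horizon P + 1" "y \<in> enl (Xc P (t - 1)) eps" for t y
    using that(2) that(1,3)
  proof (induction t arbitrary: y rule: inc_induct)
    case base
    show ?case
      using Qk_last Qcal_last[of P] by simp
  next
    case (step n)
    then have n: "2 \<le> n" "n \<le> horizon P"
      by auto
    have "\<forall>x\<in>Xc P n. Qk (Suc k) (n + 1) x \<le> Qcal P (n + 1) x"
      using step.IH n subset_enl[of eps "Xc P n"] H2_eps_pos[OF h2] by auto
    then have "ereal (cutting_plane (Suc k) n y) \<le> Qcal P n y"
      using n by (intro cutting_plane_le_Qcal) auto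
    moreover have "Qk k n y \<le> Qcal P n y"
      using Suc.IH step.prems n by auto
    ultimately show ?case
      unfolding Qk_Suc[OF n] by simp
  qed
  then show ?case
    using Suc.prems by auto
qed

lemma Qk_lipschitz:
  assumes k: "1 \<le> k" and t: "t \<in> {2..horizon P + 1}"
  shows "lipschitz_ereal_on (enl (Xc P (t - 1)) eps) (Qk k t)"
proof (cases "t = horizon P + 1")
  case True
  then show ?thesis
    using Qk_last lipschitz_ereal_on_const[of _ 0] by (simp add: zero_ereal_def)
next
  case False
  with t have t: "2 \<le> t" "t \<le> horizon P"
    by auto
  show ?thesis
    using k
  proof (induction k rule: dec_induct)
    case base
    from t have "t \<in> {2..horizon P}"
      by simp
    then show ?case
    proof (cases rule: Q0_cases)
      case 1
      then have "Qk 1 t = (\<lambda>y. ereal (cutting_plane 1 t y))"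
        using Qk_Suc[OF t, of 0] by simp
      then show ?thesis
        unfolding cutting_plane_def by (simp only: lipschitz_ereal_on_affine)
    next
      case 2
      have "Qk 1 t = (\<lambda>y. max (Qk 0 t y) (ereal (cutting_plane 1 t y)))"
        using Qk_Suc[OF t, of 0] by simp
      then show ?thesis
        unfolding cutting_plane_def using 2 by (simp only: lipschitz_ereal_on_max_affine)
    qed
  next
    case (step k)
    then show ?case
      unfolding Qk_Suc[OF t] cutting_plane_def by (intro lipschitz_ereal_on_max_affine)
  qed
qed

lemma Qk_mono: "2 \<le> t \<Longrightarrow> t \<le> horizon P \<Longrightarrow> k \<le> k' \<Longrightarrow> Qk k t y \<le> Qk k' t y"
  using lift_Suc_mono_le[of "\<lambda>k. Qk k t y"] by (simp add: Qk_Suc)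

text \<open>The approximations increase with \<open>k\<close>, so the first cut bounds all of them from below.\<close>

lemma Qk_next_bdd_below:
  assumes t: "2 \<le> t" "t \<le> horizon P"
  shows "\<exists>c. \<forall>k\<ge>1. \<forall>x\<in>Xc P t. ereal c \<le> Qk k (t + 1) x"
proof (cases "t = horizon P")
  case True
  then show ?thesis
    using Qk_last by (intro exI[of _ 0]) simp
next
  case False
  with t have t': "2 \<le> t + 1" "t + 1 \<le> horizon P"
    by auto
  have "bounded (Xc P t)"
    using h2 t by (intro compact_imp_bounded H2_compact) auto
  then obtain c where c: "\<forall>x\<in>Xc P t. c \<le> cutting_plane 1 (t + 1) x"
    unfolding cutting_plane_def by (metis bounded_imp_affine_bdd_below)
  have "ereal c \<le> Qk k (t + 1) x" if "1 \<le> k" "x \<in> Xc P t" for k x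
  proof -
    have "ereal c \<le> ereal (cutting_plane 1 (t + 1) x)"
      using c that(2) by simp
    also have "\<dots> \<le> Qk 1 (t + 1) x"
      using Qk_Suc[OF t', of 0] by simp
    also have "\<dots> \<le> Qk k (t + 1) x"
      using Qk_mono[OF t' that(1)] .
    finally show ?thesis .
  qed
  then show ?thesis
    by blast
qed

lemma trial_value_bdd_below:
  assumes t: "2 \<le> t" "t \<le> horizon P" and j: "j < nreal P"
  shows "\<exists>lo. \<forall>k\<ge>1. lo \<le> trial_value k t j"
proof -
  obtain cf where cf: "\<forall>z\<in>enl (Xc P (t - 1)) eps \<times> Xc P t. ereal cf \<le> fc P t j z"
    using stage_cost_bdd_below[OF h2 t j] by blast
  obtain cq where cq: "\<forall>k\<ge>1. \<forall>x\<in>Xc P t. ereal cq \<le> Qk k (t + 1) x"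
    using Qk_next_bdd_below[OF t] by blast
  have "cf + cq \<le> trial_value k t j" if k: "1 \<le> k" for k
  proof -
    have "trial k t \<in> enl (Xc P (t - 1)) eps"
      using trial_in_Xc[OF k t] subset_enl[of eps] H2_eps_pos[OF h2] by auto
    then have "ereal cf + ereal cq \<le> fc P t j (trial k t, x) + Qk k (t + 1) x"
      if "x \<in> Xfeas P t j (trial k t)" for x
      using that Xfeas_subset cf cq k by (intro add_mono) blast+
    then have "ereal (cf + cq) \<le> stage_value P t j (Qk k (t + 1)) (trial k t)"
      unfolding stage_value_def by (intro INF_greatest) simp
    then show ?thesis
      using stage_value_trial[OF k t j] by simp
  qed
  then show ?thesis
    by blast
qed

lemma trial_minorant_bdd_above:
  assumes t: "2 \<le> t" "t \<le> horizon P" and j: "j < nreal P"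
  shows "\<exists>up. \<forall>k\<ge>1. \<forall>y\<in>cball (trial k t) (eps / 2).
    trial_value k t j + pig k t j \<bullet> (y - trial k t) \<le> up"
proof -
  obtain up where up: "\<forall>y\<in>enl (Xc P (t - 1)) (eps / 2). stage_value P t j (Qcal P (t + 1)) y \<le> ereal up"
    using stage_value_Qcal_bdd_above[OF h1 h2 t j] by blast
  have "trial_value k t j + pig k t j \<bullet> (y - trial k t) \<le> up"
    if k: "1 \<le> k" and y: "y \<in> cball (trial k t) (eps / 2)" for k y
  proof -
    have "\<forall>x\<in>Xc P t. Qk k (t + 1) x \<le> Qcal P (t + 1) x"
      using Qk_le_Qcal[of "t + 1"] t subset_enl[of eps "Xc P t"] H2_eps_pos[OF h2] by auto
    then have "ereal (trial_value k t j + pig k t j \<bullet> (y - trial k t))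
        \<le> stage_value P t j (Qcal P (t + 1)) y"
      using subgradient_inequality[OF k t j, of y] stage_value_mono order_trans by blast
    also have "\<dots> \<le> ereal up"
      using up y trial_in_Xc[OF k t] unfolding enl_def by blast
    finally show ?thesis
      by simp
  qed
  then show ?thesis
    by blast
qed

lemma trial_value_subgradient_bounded:
  assumes t: "2 \<le> t" "t \<le> horizon P" and j: "j < nreal P"
  shows "\<exists>D G. \<forall>k\<ge>1. \<bar>trial_value k t j\<bar> \<le> D \<and> norm (pig k t j) \<le> G"
proof -
  obtain lo up where lo: "\<forall>k\<ge>1. lo \<le> trial_value k t j"
    and up: "\<forall>k\<ge>1. \<forall>y\<in>cball (trial k t) (eps / 2). trial_value k t j + pig k t j \<bullet> (y - trial k t) \<le> up"
    using trial_value_bdd_below[OF t j] trial_minorant_bdd_above[OF t j] by blast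
  have eps: "0 < eps / 2"
    using H2_eps_pos[OF h2] by simp
  have "\<bar>trial_value k t j\<bar> \<le> \<bar>lo\<bar> + \<bar>up\<bar> \<and> norm (pig k t j) \<le> (up - lo) / (eps / 2)"
    if k: "1 \<le> k" for k
  proof
    have "trial_value k t j \<le> up"
      using up k eps centre_in_cball[of "trial k t" "eps / 2"] by fastforce
    with lo k show "\<bar>trial_value k t j\<bar> \<le> \<bar>lo\<bar> + \<bar>up\<bar>"
      by fastforce
    have "norm (pig k t j) \<le> (up - trial_value k t j) / (eps / 2)"
      using up k by (intro norm_le_of_affine_bound_on_cball[OF eps]) blast
    also have "\<dots> \<le> (up - lo) / (eps / 2)"
      using lo k eps by (intro divide_right_mono) auto
    finally show "norm (pig k t j) \<le> (up - lo) / (eps / 2)" .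
  qed
  then show ?thesis
    by blast
qed

lemma theta_beta_bounded:
  assumes t: "2 \<le> t" "t \<le> horizon P"
  shows "(\<exists>C. \<forall>k\<ge>1. \<bar>theta k t\<bar> \<le> ereal C) \<and> (\<exists>C. \<forall>k\<ge>1. norm (beta k t) \<le> C)"
proof -
  obtain D G where bound: "\<And>j k. j < nreal P \<Longrightarrow> 1 \<le> k \<Longrightarrow>
      \<bar>trial_value k t j\<bar> \<le> D j \<and> norm (pig k t j) \<le> G j"
    using trial_value_subgradient_bounded[OF t] by metis
  have p: "0 \<le> prb P t j" if "j < nreal P" for j
    using H1_prb_nonneg[OF h1 t that] .
  have "\<bar>theta k t\<bar> \<le> ereal (\<Sum>j<nreal P. prb P t j * D j)" if k: "1 \<le> k" for k
  proof -
    have "\<bar>\<Sum>j<nreal P. prb P t j * trial_value k t j\<bar> \<le> (\<Sum>j<nreal P. prb P t j * \<bar>trial_value k t j\<bar>)"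
      using p by (auto intro: order_trans[OF sum_abs] sum_mono simp: abs_mult)
    also have "\<dots> \<le> (\<Sum>j<nreal P. prb P t j * D j)"
      using p bound k by (intro sum_mono mult_left_mono) auto
    finally show ?thesis
      unfolding theta_eq[OF k t] by simp
  qed
  moreover have "norm (beta k t) \<le> (\<Sum>j<nreal P. prb P t j * G j)" if k: "1 \<le> k" for k
  proof -
    have "norm (beta k t) \<le> (\<Sum>j<nreal P. prb P t j * norm (pig k t j))"
      unfolding backward_pass(3)[OF k t] using p
      by (auto intro: order_trans[OF norm_sum] sum_mono)
    also have "\<dots> \<le> (\<Sum>j<nreal P. prb P t j * G j)"
      using p bound k by (intro sum_mono mult_left_mono) auto
    finally show ?thesis .
  qed
  ultimately show ?thesis
    by blast
qed

end

theorem mainTheorem4: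
  fixes P :: "('n::finite,'m::finite,'c::finite) msp"
    and eps :: real
    and lam :: "nat \<Rightarrow> nat \<Rightarrow> real"
    and xP :: "nat \<Rightarrow> nat \<Rightarrow> real^'n"
    and Q0 :: "nat \<Rightarrow> real^'n \<Rightarrow> ereal"
    and Mw :: "'w measure"
    and xf :: "'w \<Rightarrow> nat \<Rightarrow> nat list \<Rightarrow> real^'n"
    and sj :: "'w \<Rightarrow> nat \<Rightarrow> nat \<Rightarrow> nat"
    and Qk :: "'w \<Rightarrow> nat \<Rightarrow> nat \<Rightarrow> real^'n \<Rightarrow> ereal"
    and pig :: "'w \<Rightarrow> nat \<Rightarrow> nat \<Rightarrow> nat \<Rightarrow> real^'n"
    and theta :: "'w \<Rightarrow> nat \<Rightarrow> nat \<Rightarrow> ereal"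
    and beta :: "'w \<Rightarrow> nat \<Rightarrow> nat \<Rightarrow> real^'n"
  assumes h1: "H1 P"
    and h2: "H2 P eps"
    and Q0: "\<forall>t\<in>{2..horizon P}. (\<forall>x. Q0 t x = -\<infinity>) \<or>
               (econvex (Q0 t) \<and>
                (\<exists>L q. lipschitz_on L (enl (Xst P (t - 1)) eps) q \<and>
                       (\<forall>x\<in>enl (Xst P (t - 1)) eps. Q0 t x = ereal (q x))) \<and>
                (\<forall>x\<in>enl (Xst P (t - 1)) eps. Q0 t x \<le> Qcal P t x))"
    and lam: "\<forall>t k. 0 \<le> lam t k" "\<forall>t. lam t 1 = 0" "\<forall>k. lam (horizon P) k = 0"
    and xP: "\<forall>t\<in>{1..horizon P}. \<forall>k\<ge>1. xP t k \<in> Xc P t"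
    and prob: "prob_space Mw"
    and run: "\<forall>w\<in>space Mw. sreda_run P lam xP Q0 (xf w) (sj w) (Qk w) (pig w) (theta w) (beta w)"
  shows "AE w in Mw. \<forall>t\<in>{2..horizon P + 1}.
           (\<forall>k\<ge>1. econvex (Qk w k t) \<and>
                   (\<forall>x\<in>enl (Xst P (t - 1)) eps. Qk w k t x \<le> Qcal P t x)) \<and>
           (t \<le> horizon P \<longrightarrow>
              (\<exists>C. \<forall>k\<ge>1. \<bar>theta w k t\<bar> \<le> ereal C) \<and>
              (\<exists>C. \<forall>k\<ge>1. norm (beta w k t) \<le> C)) \<and>
           (\<forall>k\<ge>1. \<exists>L q. lipschitz_on L (enl (Xst P (t - 1)) eps) q \<and>
                   (\<forall>x\<in>enl (Xst P (t - 1)) eps. Qk w k t x = ereal (q x)))"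
proof (rule AE_I2, rule ballI, goal_cases)
  case (1 w t)
  interpret sreda_trajectory P eps lam xP Q0 "xf w" "sj w" "Qk w" "pig w" "theta w" "beta w"
    using h1 h2 Q0 run 1(1) by unfold_locales auto
  have "Xst P (t - 1) = Xc P (t - 1)"
    using 1(2) by (intro Xst_eq_Xc) auto
  then show ?case
    using 1(2) Qk_econvex[OF 1(2)] Qk_le_Qcal[OF 1(2)] theta_beta_bounded Qk_lipschitz[OF _ 1(2)]
    unfolding lipschitz_ereal_on_def by auto
qed

end
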